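(* Let $\mathcal{G}$ be an $m$-uniform $k$-regular hypergraph with $n$ vertices, and let $\theta=\binom{n-2}{m-2}/(m-1)$. Then the minimum eigenvalue $\lambda_n$ of $A_{\mathcal{G}}$ satisfies $\lambda_n\ge k-\theta-\binom{n-1}{m-1}$.
   Context: A hypergraph $\mathcal{G}=(V,E)$ has a finite vertex set $V$ and a set $E$ of subsets of $V$ (edges), each of cardinality at least $2$; it is $m$-uniform if every edge has exactly $m$ vertices, and $k$-regular if every vertex lies in exactly $k$ edges. The adjacency matrix $A_{\mathcal{G}}$ has $(A_{\mathcal{G}})_{ij}=\sum_{e\in E,\, i,j\in e}\frac{1}{|e|-1}$ for $i\ne j$ and zero diagonal. *)

theory Defs
  imports "Jordan_Normal_Form.Char_Poly"
begin

definition hypergraph :: "nat \<Rightarrow> nat set set \<Rightarrow> bool" where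
  "hypergraph n E \<longleftrightarrow> (\<forall>e\<in>E. e \<subseteq> {..<n} \<and> card e \<ge> 2)"

definition uniform_hg :: "nat \<Rightarrow> nat set set \<Rightarrow> bool" where
  "uniform_hg m E \<longleftrightarrow> (\<forall>e\<in>E. card e = m)"

definition regular_hg :: "nat \<Rightarrow> nat \<Rightarrow> nat set set \<Rightarrow> bool" where
  "regular_hg n k E \<longleftrightarrow> (\<forall>v<n. card {e\<in>E. v \<in> e} = k)"

definition hg_adj :: "nat \<Rightarrow> nat set set \<Rightarrow> real mat" where
  "hg_adj n E = mat n n (\<lambda>(i,j). if i = j then 0
      else (\<Sum>e\<in>{e\<in>E. i \<in> e \<and> j \<in> e}. 1 / (real (card e) - 1)))"

end

theory Submission
  imports Defs
begin

text \<open>Write A for the adjacency matrix and \<theta> for the bound on its off-diagonal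
entries. A is symmetric with row sums k, so k is an eigenvalue with the all-ones
eigenvector, and every eigenvector v for another eigenvalue \<lambda> has coordinate sum 0.
Hence v is also an eigenvector of the entrywise nonnegative matrix
\<theta>(J - I) - A, with eigenvalue -(\<theta> + \<lambda>). Its row sums are \<theta>(n - 1) - k, which
bounds the modulus of every eigenvalue, so \<lambda> \<ge> k - \<theta>n. Finally
\<theta>(n - 1) = binom(n-1, m-1).\<close>

lemma abs_eigenvalue_le_row_sum_bound:
  fixes b :: "nat \<Rightarrow> nat \<Rightarrow> real" and v :: "nat \<Rightarrow> real"
  assumes nonneg: "\<And>i j. i < n \<Longrightarrow> j < n \<Longrightarrow> b i j \<ge> 0"
    and row_sum: "\<And>i. i < n \<Longrightarrow> (\<Sum>j<n. b i j) \<le> r"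
    and eigen: "\<And>i. i < n \<Longrightarrow> (\<Sum>j<n. b i j * v j) = \<mu> * v i"
    and "j0 < n" "v j0 \<noteq> 0"
  shows "\<bar>\<mu>\<bar> \<le> r"
proof -
  define M where "M = Max ((\<lambda>j. \<bar>v j\<bar>) ` {..<n})"
  have "M \<in> (\<lambda>j. \<bar>v j\<bar>) ` {..<n}"
    unfolding M_def using \<open>j0 < n\<close> by (intro Max_in) auto
  then obtain i where i: "i < n" "\<bar>v i\<bar> = M" by auto
  have max: "\<bar>v j\<bar> \<le> \<bar>v i\<bar>" if "j < n" for j
    unfolding i(2) M_def using that by (intro Max_ge) auto
  have "\<bar>v i\<bar> > 0" using max[OF \<open>j0 < n\<close>] \<open>v j0 \<noteq> 0\<close> by linarith
  have "\<bar>\<mu>\<bar> * \<bar>v i\<bar> = \<bar>\<Sum>j<n. b i j * v j\<bar>"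
    using eigen[OF i(1)] by (simp add: abs_mult)
  also have "\<dots> \<le> (\<Sum>j<n. \<bar>b i j * v j\<bar>)"
    by (rule sum_abs)
  also have "\<dots> = (\<Sum>j<n. b i j * \<bar>v j\<bar>)"
    using nonneg[OF i(1)] by (simp add: abs_mult)
  also have "\<dots> \<le> (\<Sum>j<n. b i j * \<bar>v i\<bar>)"
    using nonneg[OF i(1)] max by (intro sum_mono mult_left_mono) auto
  also have "\<dots> \<le> r * \<bar>v i\<bar>"
    using row_sum[OF i(1)] \<open>\<bar>v i\<bar> > 0\<close> by (simp add: sum_distrib_right[symmetric])
  finally show ?thesis using \<open>\<bar>v i\<bar> > 0\<close> by simp
qed

lemma eigenvector_sum_eq_0:
  fixes a :: "nat \<Rightarrow> nat \<Rightarrow> real"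
  assumes sym: "\<And>i j. i < n \<Longrightarrow> j < n \<Longrightarrow> a i j = a j i"
    and row_sum: "\<And>i. i < n \<Longrightarrow> (\<Sum>j<n. a i j) = k"
    and eigen: "\<And>i. i < n \<Longrightarrow> (\<Sum>j<n. a i j * v j) = l * v i"
    and "l \<noteq> k"
  shows "(\<Sum>i<n. v i) = 0"
proof -
  have "l * (\<Sum>i<n. v i) = (\<Sum>i<n. \<Sum>j<n. a i j * v j)"
    using eigen by (simp add: sum_distrib_left)
  also have "\<dots> = (\<Sum>j<n. (\<Sum>i<n. a j i) * v j)"
    by (subst sum.swap) (simp add: sum_distrib_right sym)
  also have "\<dots> = k * (\<Sum>j<n. v j)"
    using row_sum by (simp add: sum_distrib_left)
  finally show ?thesis using \<open>l \<noteq> k\<close> by simp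
qed

lemma eigenvalue_ge_of_bounded_entries:
  fixes a :: "nat \<Rightarrow> nat \<Rightarrow> real"
  assumes sym: "\<And>i j. i < n \<Longrightarrow> j < n \<Longrightarrow> a i j = a j i"
    and diag: "\<And>i. i < n \<Longrightarrow> a i i = 0"
    and bounds: "\<And>i j. i < n \<Longrightarrow> j < n \<Longrightarrow> 0 \<le> a i j \<and> a i j \<le> \<theta>"
    and row_sum: "\<And>i. i < n \<Longrightarrow> (\<Sum>j<n. a i j) = k"
    and eigen: "\<And>i. i < n \<Longrightarrow> (\<Sum>j<n. a i j * v j) = l * v i"
    and "j0 < n" "v j0 \<noteq> 0"
  shows "l \<ge> k - \<theta> * real n"
proof (cases "l = k")
  case True
  have "\<theta> \<ge> 0" using bounds[OF \<open>j0 < n\<close> \<open>j0 < n\<close>] by simp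
  then show ?thesis using True by simp
next
  case False
  have sum_v: "(\<Sum>j<n. v j) = 0"
    using eigenvector_sum_eq_0[OF sym row_sum eigen False] .
  define b where "b i j = (if i = j then 0 else \<theta>) - a i j" for i j
  have off_diag: "(\<Sum>j<n. if i = j then f j else 0) = f i" if "i < n" for i and f :: "nat \<Rightarrow> real"
    using that by (simp add: sum.delta)
  have "\<bar>-(\<theta> + l)\<bar> \<le> \<theta> * (real n - 1) - k"
  proof (rule abs_eigenvalue_le_row_sum_bound[where b = b and v = v])
    show "b i j \<ge> 0" if "i < n" "j < n" for i j
      using bounds[OF that] diag[OF that(1)] by (auto simp: b_def)
    show "(\<Sum>j<n. b i j) \<le> \<theta> * (real n - 1) - k" if "i < n" for i
    proof -
      have "(\<Sum>j<n. if i = j then 0 else \<theta>) = (\<Sum>j<n. \<theta> - (if i = j then \<theta> else 0))"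
        by (intro sum.cong) auto
      then show ?thesis
        using that off_diag[OF that] row_sum[OF that]
        by (simp add: b_def sum_subtractf algebra_simps)
    qed
    show "(\<Sum>j<n. b i j * v j) = -(\<theta> + l) * v i" if "i < n" for i
    proof -
      have "b i j * v j = \<theta> * v j - (if i = j then \<theta> * v j else 0) - a i j * v j" for j
        by (simp add: b_def algebra_simps)
      then have "(\<Sum>j<n. b i j * v j)
          = \<theta> * (\<Sum>j<n. v j) - (\<Sum>j<n. if i = j then \<theta> * v j else 0) - (\<Sum>j<n. a i j * v j)"
        by (simp add: sum_subtractf sum_distrib_left)
      then show ?thesis
        using sum_v off_diag[OF that] eigen[OF that] by (simp add: algebra_simps)
    qed
  qed (use \<open>j0 < n\<close> \<open>v j0 \<noteq> 0\<close> in auto)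
  then show ?thesis by (simp add: algebra_simps abs_le_iff)
qed

lemma eigenvalue_imp_eigen_equations:
  fixes A :: "'a :: comm_ring_1 mat"
  assumes "A \<in> carrier_mat n n" "eigenvalue A l"
  obtains v j0 where "j0 < n" "v j0 \<noteq> 0"
    "\<And>i. i < n \<Longrightarrow> (\<Sum>j<n. A $$ (i, j) * v j) = l * v i"
proof -
  obtain v where v: "v \<in> carrier_vec n" "v \<noteq> 0\<^sub>v n" "A *\<^sub>v v = l \<cdot>\<^sub>v v"
    using assms by (auto simp: eigenvalue_def eigenvector_def)
  have "\<exists>j0<n. v $ j0 \<noteq> 0"
  proof (rule ccontr)
    assume "\<not> ?thesis"
    then have "v = 0\<^sub>v n" using v(1) by (intro eq_vecI) auto
    then show False using v(2) by simp
  qed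
  moreover have "(\<Sum>j<n. A $$ (i, j) * v $ j) = l * v $ i" if "i < n" for i
  proof -
    have "(A *\<^sub>v v) $ i = (l \<cdot>\<^sub>v v) $ i" using v(3) by simp
    then show ?thesis
      using that v(1) assms(1) by (simp add: scalar_prod_def lessThan_atLeast0)
  qed
  ultimately show thesis using that[of _ "\<lambda>j. v $ j"] by blast
qed

definition codegree :: "nat set set \<Rightarrow> nat \<Rightarrow> nat \<Rightarrow> nat" where
  "codegree E i j = card {e\<in>E. i \<in> e \<and> j \<in> e}"

lemma codegree_commute: "codegree E i j = codegree E j i"
  unfolding codegree_def by (metis (no_types, lifting) Collect_cong)

lemma hg_adj_entry:
  assumes "uniform_hg m E" "i < n" "j < n"
  shows "hg_adj n E $$ (i, j) = (if i = j then 0 else real (codegree E i j) / (real m - 1))"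
proof -
  have "(\<Sum>e\<in>{e\<in>E. i \<in> e \<and> j \<in> e}. 1 / (real (card e) - 1))
        = (\<Sum>e\<in>{e\<in>E. i \<in> e \<and> j \<in> e}. 1 / (real m - 1))"
    using assms(1) by (intro sum.cong) (auto simp: uniform_hg_def)
  then show ?thesis using assms by (simp add: hg_adj_def codegree_def)
qed

lemma codegree_le_binomial:
  assumes "hypergraph n E" "uniform_hg m E" "i < n" "j < n" "i \<noteq> j"
  shows "codegree E i j \<le> (n - 2) choose (m - 2)"
proof -
  let ?S = "{e\<in>E. i \<in> e \<and> j \<in> e}"
  let ?T = "{s. s \<subseteq> {..<n} - {i, j} \<and> card s = m - 2}"
  have "inj_on (\<lambda>e. e - {i, j}) ?S"
    by (rule inj_onI) blast
  moreover have "(\<lambda>e. e - {i, j}) ` ?S \<subseteq> ?T"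
  proof clarify
    fix e assume e: "e \<in> E" "i \<in> e" "j \<in> e"
    have "e \<subseteq> {..<n}" "card e = m"
      using e assms(1,2) by (auto simp: hypergraph_def uniform_hg_def)
    moreover have "finite e" using \<open>e \<subseteq> {..<n}\<close> finite_subset by blast
    ultimately show "e - {i, j} \<subseteq> {..<n} - {i, j} \<and> card (e - {i, j}) = m - 2"
      using e assms(5) by (auto simp: card_Diff_subset)
  qed
  ultimately have "card ?S \<le> card ?T"
    by (intro card_inj_on_le) auto
  also have "card ?T = card ({..<n} - {i, j}) choose (m - 2)"
    by (rule n_subsets) simp
  also have "card ({..<n} - {i, j}) = n - 2"
    using assms(3-5) by (subst card_Diff_subset) auto
  finally show ?thesis by (simp add: codegree_def)
qed

lemma sum_codegree:
  assumes "hypergraph n E" "uniform_hg m E" "regular_hg n k E" "i < n"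
  shows "(\<Sum>j\<in>{..<n} - {i}. codegree E i j) = k * (m - 1)"
proof -
  let ?Ei = "{e\<in>E. i \<in> e}"
  have "finite E"
    using assms(1) finite_subset[of E "Pow {..<n}"] by (auto simp: hypergraph_def)
  have "card {j\<in>{..<n} - {i}. j \<in> e} = m - 1" if "e \<in> ?Ei" for e
  proof -
    have "e \<subseteq> {..<n}" "card e = m"
      using that assms(1,2) by (auto simp: hypergraph_def uniform_hg_def)
    then have "{j\<in>{..<n} - {i}. j \<in> e} = e - {i}" by auto
    then show ?thesis using \<open>card e = m\<close> that by simp
  qed
  then have "(\<Sum>j\<in>{..<n} - {i}. card {e\<in>?Ei. j \<in> e}) = (\<Sum>e\<in>?Ei. m - 1)"
    using \<open>finite E\<close> by (intro sum_multicount_gen) auto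
  also have "\<dots> = k * (m - 1)"
    using assms(3,4) by (simp add: regular_hg_def)
  moreover have "card {e\<in>?Ei. j \<in> e} = codegree E i j" for j
    unfolding codegree_def by (metis (no_types, lifting) mem_Collect_eq)
  ultimately show ?thesis by simp
qed

lemma hg_adj_row_sum:
  assumes "hypergraph n E" "m \<ge> 2" "uniform_hg m E" "regular_hg n k E" "i < n"
  shows "(\<Sum>j<n. hg_adj n E $$ (i, j)) = real k"
proof -
  have "(\<Sum>j<n. hg_adj n E $$ (i, j)) = (\<Sum>j\<in>{..<n} - {i}. real (codegree E i j) / (real m - 1))"
    using assms(3,5) by (simp add: hg_adj_entry sum.If_cases Diff_eq)
  also have "\<dots> = real (k * (m - 1)) / (real m - 1)"
    by (simp add: sum_divide_distrib[symmetric] sum_codegree[OF assms(1,3,4,5)] flip: of_nat_sum)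
  also have "\<dots> = real k"
    using assms(2) by (simp add: of_nat_diff)
  finally show ?thesis .
qed

lemma hg_adj_symmetric:
  "uniform_hg m E \<Longrightarrow> i < n \<Longrightarrow> j < n \<Longrightarrow> hg_adj n E $$ (i, j) = hg_adj n E $$ (j, i)"
  by (simp add: hg_adj_entry codegree_commute)

lemma hg_adj_diag: "uniform_hg m E \<Longrightarrow> i < n \<Longrightarrow> hg_adj n E $$ (i, i) = 0"
  by (simp add: hg_adj_entry)

lemma hg_adj_entry_bounds:
  assumes "hypergraph n E" "m \<ge> 2" "uniform_hg m E" "i < n" "j < n"
  shows "0 \<le> hg_adj n E $$ (i, j)
    \<and> hg_adj n E $$ (i, j) \<le> real ((n - 2) choose (m - 2)) / real (m - 1)"
  using codegree_le_binomial[OF assms(1,3-5)] assms(2)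
  by (auto simp: hg_adj_entry[OF assms(3-5)] of_nat_diff intro: divide_right_mono)

lemma pred_times_binomial_eq:
  assumes "m \<ge> 2"
  shows "(n - 1) * ((n - 2) choose (m - 2)) = (m - 1) * ((n - 1) choose (m - 1))"
proof (cases "n \<ge> 2")
  case True
  then obtain a b where "n = Suc (Suc a)" "m = Suc (Suc b)"
    using assms by (metis add_2_eq_Suc le_Suc_ex)
  then show ?thesis using Suc_times_binomial_eq[of a b] by simp
next
  case False
  then have "n - 1 = 0" by simp
  then show ?thesis using assms by (cases "m - 1") simp_all
qed

lemma binomial_ratio_times_pred_le:
  assumes "m \<ge> 2"
  shows "real ((n - 2) choose (m - 2)) / real (m - 1) * (real n - 1) \<le> real ((n - 1) choose (m - 1))"
proof (cases "n = 0")
  case False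
  then have "real (n - 1) * real ((n - 2) choose (m - 2)) = real (m - 1) * real ((n - 1) choose (m - 1))"
    using pred_times_binomial_eq[OF assms, of n] by (metis of_nat_mult)
  then show ?thesis
    using False assms by (simp add: of_nat_diff field_simps)
next
  case True
  then have "real ((n - 2) choose (m - 2)) / real (m - 1) * (real n - 1)
      = - (real ((n - 2) choose (m - 2)) / real (m - 1))"
    by simp
  also have "\<dots> \<le> 0" by simp
  also have "0 \<le> real ((n - 1) choose (m - 1))" by simp
  finally show ?thesis .
qed

theorem proposition1:
  fixes n m k :: nat and E :: "nat set set"
  assumes "hypergraph n E"
    and "m \<ge> 2"
    and "uniform_hg m E"
    and "regular_hg n k E"
  shows "\<forall>l. eigenvalue (hg_adj n E) l \<longrightarrow>
           l \<ge> real k - real ((n - 2) choose (m - 2)) / real (m - 1)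
                 - real ((n - 1) choose (m - 1))"
proof (intro allI impI)
  fix l assume "eigenvalue (hg_adj n E) l"
  moreover have "hg_adj n E \<in> carrier_mat n n" by (simp add: hg_adj_def)
  ultimately obtain v j0 where eigen: "j0 < n" "v j0 \<noteq> 0"
    "\<And>i. i < n \<Longrightarrow> (\<Sum>j<n. hg_adj n E $$ (i, j) * v j) = l * v i"
    using eigenvalue_imp_eigen_equations by blast
  define \<theta> where "\<theta> = real ((n - 2) choose (m - 2)) / real (m - 1)"
  have "l \<ge> real k - \<theta> * real n"
    unfolding \<theta>_def
    by (rule eigenvalue_ge_of_bounded_entries[where a = "\<lambda>i j. hg_adj n E $$ (i, j)",
          OF hg_adj_symmetric[OF assms(3)] hg_adj_diag[OF assms(3)]
          hg_adj_entry_bounds[OF assms(1-3)] hg_adj_row_sum[OF assms] eigen(3,1,2)])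
  moreover have "\<theta> * (real n - 1) \<le> real ((n - 1) choose (m - 1))"
    unfolding \<theta>_def by (rule binomial_ratio_times_pred_le[OF assms(2)])
  ultimately show "l \<ge> real k - \<theta> - real ((n - 1) choose (m - 1))"
    by (simp add: algebra_simps)
qed

end
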